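(* Let $V$ be a finite set, let $t,q$ be positive integers, and let $N=(t!)^2\cdot q^{t+1}$. Let $\mathbf{x}_1,\dots,\mathbf{x}_N\in V^t$ be vectors each of which has pairwise distinct entries. Then there exist indices $i_1<\dots<i_q$ such that, writing $\mathbf{y}_k=\mathbf{x}_{i_k}$ for $k=1,\dots,q$: (1) for each $j=1,\dots,t$, the entries $(\mathbf{y}_1)_j,\dots,(\mathbf{y}_q)_j$ are either all equal or pairwise distinct; and (2) the sets $Y_1,\dots,Y_t$ are pairwise disjoint, where $Y_j=\{(\mathbf{y}_1)_j,\dots,(\mathbf{y}_q)_j\}$.
   Context: For a vector $\mathbf{x}\in V^t$, $(\mathbf{x})_j$ denotes its $j$-th entry. *)

theory Defs
  imports Main
begin

end

theory Submission
  imports Defs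
begin

(* Induction on the number t of coordinates. Take a maximal set D of vectors whose entry sets
   are pairwise disjoint. If |D| \<ge> q, any q vectors of D already work: every coordinate is
   injective on them and distinct coordinates take disjoint values. Otherwise every vector
   shares a value with some vector of D, so pigeonholing over the at most q t^2 pairs
   (own coordinate j, value of D) leaves N_t / (q t^2) = N_(t-1) vectors agreeing in one
   coordinate j, where N_t = (t!)^2 q^(t+1). Dropping j and recursing yields the q vectors;
   coordinate j is constant on them, and it is disjoint from the other coordinates because
   each vector has distinct entries. *)

lemma pigeonhole_card_fiber:
  assumes "finite B" and "\<forall>i\<in>I. \<exists>b\<in>B. R i b" and "card B * m < card I"
  shows "\<exists>b\<in>B. m < card {i\<in>I. R i b}"
proof (rule ccontr)
  assume "\<not> ?thesis"
  then have small: "\<forall>b\<in>B. card {i\<in>I. R i b} \<le> m" by auto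
  have "I = (\<Union>b\<in>B. {i\<in>I. R i b})" using assms(2) by blast
  then have "card I \<le> (\<Sum>b\<in>B. card {i\<in>I. R i b})"
    using card_UN_le[OF assms(1)] by metis
  also have "\<dots> \<le> card B * m" using sum_mono[OF small[rule_format]] by simp
  finally show False using assms(3) by simp
qed

lemma strict_mono_enumeration:
  fixes S :: "'a::linorder set"
  assumes "finite S"
  obtains f where "strict_mono_on {..<card S} f" and "f ` {..<card S} = S"
proof
  let ?xs = "sorted_list_of_set S"
  have "length ?xs = card S" by simp
  then show "strict_mono_on {..<card S} (nth ?xs)"
    unfolding strict_mono_on_def by (auto intro: sorted_wrt_nth_less)
  show "nth ?xs ` {..<card S} = S"
    using assms \<open>length ?xs = card S\<close> by (metis lessThan_def set_conv_nth set_sorted_list_of_set image_Collect)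
qed

definition column :: "('i \<Rightarrow> 'j \<Rightarrow> 'a) \<Rightarrow> 'i set \<Rightarrow> 'j \<Rightarrow> 'a set" where
  "column x S j = (\<lambda>k. x k j) ` S"

definition canonical :: "('i \<Rightarrow> 'j \<Rightarrow> 'a) \<Rightarrow> 'j set \<Rightarrow> 'i set \<Rightarrow> bool" where
  "canonical x J S \<longleftrightarrow>
     (\<forall>j\<in>J. (\<forall>k\<in>S. \<forall>l\<in>S. x k j = x l j) \<or> inj_on (\<lambda>k. x k j) S) \<and>
     pairwise (\<lambda>j j'. disjnt (column x S j) (column x S j')) J"

definition disjoint_rows :: "('i \<Rightarrow> 'j \<Rightarrow> 'a) \<Rightarrow> 'j set \<Rightarrow> 'i set \<Rightarrow> bool" where
  "disjoint_rows x J D \<longleftrightarrow> pairwise (\<lambda>k l. disjnt (x k ` J) (x l ` J)) D"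

lemma canonical_if_disjoint_rows:
  assumes "disjoint_rows x J S" and "\<forall>k\<in>S. inj_on (x k) J"
  shows "canonical x J S"
  unfolding canonical_def
proof (intro conjI ballI pairwiseI)
  fix j assume "j \<in> J"
  have "inj_on (\<lambda>k. x k j) S"
  proof (rule inj_onI, rule ccontr)
    fix k l assume "k \<in> S" "l \<in> S" "x k j = x l j" "k \<noteq> l"
    then show False
      using assms(1) \<open>j \<in> J\<close> unfolding disjoint_rows_def pairwise_def disjnt_iff by blast
  qed
  then show "(\<forall>k\<in>S. \<forall>l\<in>S. x k j = x l j) \<or> inj_on (\<lambda>k. x k j) S" ..
next
  fix j j' assume "j \<in> J" "j' \<in> J" "j \<noteq> j'"
  show "disjnt (column x S j) (column x S j')"
    unfolding column_def disjnt_iff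
  proof (clarsimp)
    fix k l assume "k \<in> S" "l \<in> S" "x k j = x l j'"
    show False
    proof (cases "k = l")
      case True
      then show False
        using assms(2) \<open>k \<in> S\<close> \<open>j \<in> J\<close> \<open>j' \<in> J\<close> \<open>j \<noteq> j'\<close> \<open>x k j = x l j'\<close>
        by (metis inj_onD)
    next
      case False
      then show False
        using assms(1) \<open>k \<in> S\<close> \<open>l \<in> S\<close> \<open>j \<in> J\<close> \<open>j' \<in> J\<close> \<open>x k j = x l j'\<close>
        unfolding disjoint_rows_def pairwise_def disjnt_iff by blast
    qed
  qed
qed

lemma canonical_subset_of_disjoint_rows:
  assumes "disjoint_rows x J D" and "\<forall>k\<in>D. inj_on (x k) J" and "q \<le> card D"
  obtains S where "S \<subseteq> D" and "card S = q" and "canonical x J S"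
proof -
  obtain S where "S \<subseteq> D" "card S = q" using assms(3) by (metis obtain_subset_with_card_n)
  moreover have "canonical x J S"
  proof (rule canonical_if_disjoint_rows)
    show "disjoint_rows x J S"
      using assms(1) \<open>S \<subseteq> D\<close> unfolding disjoint_rows_def by (rule pairwise_subset)
    show "\<forall>k\<in>S. inj_on (x k) J" using assms(2) \<open>S \<subseteq> D\<close> by blast
  qed
  ultimately show thesis using that by blast
qed

lemma canonical_insert_constant_column:
  assumes "canonical x J S"
    and "\<forall>k\<in>S. inj_on (x k) (insert j J)"
    and "\<forall>k\<in>S. x k j = v"
  shows "canonical x (insert j J) S"
proof -
  have "disjnt (column x S j) (column x S j')" if "j' \<in> J" "j' \<noteq> j" for j'
    unfolding column_def disjnt_iff
  proof (clarsimp)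
    fix k l assume "k \<in> S" "l \<in> S" "x k j = x l j'"
    then have "x l j = x l j'" using assms(3) by simp
    moreover have "inj_on (x l) (insert j J)" using assms(2) \<open>l \<in> S\<close> by blast
    ultimately show False using \<open>j' \<in> J\<close> \<open>j' \<noteq> j\<close> by (auto dest: inj_onD)
  qed
  then show ?thesis
    using assms(1,3) unfolding canonical_def by (auto simp: pairwise_insert disjnt_sym)
qed

lemma canonical_reindex:
  assumes "inj_on f A"
  shows "canonical (\<lambda>k. x (f k)) J A \<longleftrightarrow> canonical x J (f ` A)"
  using assms unfolding canonical_def column_def
  by (simp add: image_image comp_inj_on_iff o_def)

lemma maximal_disjoint_rows:
  assumes "finite I" and "J \<noteq> {}"
  obtains D where "D \<subseteq> I" and "disjoint_rows x J D"
    and "\<forall>i\<in>I. \<exists>d\<in>D. \<exists>j\<in>J. \<exists>j'\<in>J. x i j = x d j'"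
proof -
  let ?P = "\<lambda>D. D \<subseteq> I \<and> disjoint_rows x J D"
  have "\<exists>D. ?P D \<and> (\<forall>D'. ?P D' \<longrightarrow> card D' \<le> card D)"
  proof (rule ex_has_greatest_nat[of ?P "{}" card "Suc (card I)"])
    show "?P {}" by (simp add: disjoint_rows_def)
    show "\<forall>D. ?P D \<longrightarrow> card D < Suc (card I)" using assms(1) by (simp add: card_mono less_Suc_eq_le)
  qed
  then obtain D where D: "?P D" and max: "\<forall>D'. ?P D' \<longrightarrow> card D' \<le> card D" by blast
  have "\<exists>d\<in>D. \<exists>j\<in>J. \<exists>j'\<in>J. x i j = x d j'" if "i \<in> I" for i
  proof (cases "i \<in> D")
    case True
    then show ?thesis using assms(2) by blast
  next
    case False
    have "finite D" using D assms(1) finite_subset by blast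
    then have "\<not> ?P (insert i D)" using max False by (metis card_insert_disjoint lessI not_le)
    then obtain d where "d \<in> D" "\<not> disjnt (x i ` J) (x d ` J)"
      using D \<open>i \<in> I\<close> unfolding disjoint_rows_def by (auto simp: pairwise_insert disjnt_sym)
    then show ?thesis unfolding disjnt_iff by blast
  qed
  then show thesis using D that by blast
qed

lemma value_shared_by_many_rows:
  assumes "finite J" and "finite D" and "card D \<le> q"
    and meets_D: "\<forall>i\<in>I. \<exists>d\<in>D. \<exists>j\<in>J. \<exists>j'\<in>J. x i j = x d j'"
    and "q * (card J)\<^sup>2 * m < card I"
  obtains j v where "j \<in> J" and "m < card {i\<in>I. x i j = v}"
proof -
  define B where "B = J \<times> (\<lambda>(d, j'). x d j') ` (D \<times> J)"
  have "finite B" using assms(1,2) by (simp add: B_def)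
  have "card B = card J * card ((\<lambda>(d, j'). x d j') ` (D \<times> J))"
    by (simp add: B_def card_cartesian_product)
  also have "\<dots> \<le> card J * card (D \<times> J)"
    by (intro mult_le_mono2 card_image_le) (simp add: assms(1,2))
  also have "\<dots> \<le> q * (card J)\<^sup>2"
    using assms(3) by (simp add: card_cartesian_product power2_eq_square)
  finally have "card B * m < card I"
    using assms(5) by (meson le_less_trans mult_le_mono1)
  moreover have "\<exists>b\<in>B. x i (fst b) = snd b" if "i \<in> I" for i
  proof -
    obtain d j j' where "d \<in> D" "j \<in> J" "j' \<in> J" "x i j = x d j'"
      using meets_D \<open>i \<in> I\<close> by blast
    then have "(j, x d j') \<in> B" unfolding B_def by force
    then show ?thesis using \<open>x i j = x d j'\<close> by force
  qed
  ultimately obtain b where "b \<in> B" and "m < card {i\<in>I. x i (fst b) = snd b}"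
    using pigeonhole_card_fiber[where R = "\<lambda>i b. x i (fst b) = snd b", OF \<open>finite B\<close>]
    by blast
  then show thesis using that by (cases b) (auto simp: B_def)
qed

theorem canonical_subfamily_exists:
  fixes x :: "'i \<Rightarrow> 'j \<Rightarrow> 'a"
  assumes "finite J" and "finite I" and "q > 0"
    and "q ^ (card J + 1) * (fact (card J))\<^sup>2 \<le> card I"
    and "\<forall>i\<in>I. inj_on (x i) J"
  shows "\<exists>S\<subseteq>I. card S = q \<and> canonical x J S"
  using assms
proof (induction "card J" arbitrary: J I)
  case 0
  then obtain S where "S \<subseteq> I" "card S = q" by (auto intro: obtain_subset_with_card_n)
  then show ?case using 0 by (auto simp: canonical_def)
next
  case (Suc n)
  have "J \<noteq> {}" using Suc.hyps(2) by auto
  then obtain D where D: "D \<subseteq> I" "disjoint_rows x J D"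
    and meets_D: "\<forall>i\<in>I. \<exists>d\<in>D. \<exists>j\<in>J. \<exists>j'\<in>J. x i j = x d j'"
    using maximal_disjoint_rows[OF Suc.prems(2)] by metis
  show ?case
  proof (cases "q \<le> card D")
    case True
    moreover have "\<forall>k\<in>D. inj_on (x k) J" using Suc.prems(5) D(1) by blast
    ultimately obtain S where "S \<subseteq> D" "card S = q" "canonical x J S"
      using canonical_subset_of_disjoint_rows D(2) by metis
    then show ?thesis using D(1) by blast
  next
    case False
    define h where "h = q ^ (n + 1) * (fact n)\<^sup>2"
    have "finite D" using D(1) Suc.prems(2) finite_subset by blast
    have "card D \<le> q" using False by simp
    have "h > 0" using Suc.prems(3) by (simp add: h_def)
    then have "q * (card J)\<^sup>2 * (h - 1) < q * (card J)\<^sup>2 * h"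
      using Suc.prems(3) Suc.hyps(2) by (intro mult_less_mono2) simp_all
    also have "\<dots> = q ^ (card J + 1) * (fact (card J))\<^sup>2"
      unfolding h_def Suc.hyps(2)[symmetric] by (simp add: power2_eq_square algebra_simps)
    also have "\<dots> \<le> card I" by (rule Suc.prems(4))
    finally obtain j v where "j \<in> J" and big: "h - 1 < card {i\<in>I. x i j = v}"
      by (rule value_shared_by_many_rows[OF Suc.prems(1) \<open>finite D\<close> \<open>card D \<le> q\<close> meets_D])
    let ?I = "{i\<in>I. x i j = v}"
    have "\<exists>S\<subseteq>?I. card S = q \<and> canonical x (J - {j}) S"
    proof (rule Suc.hyps(1))
      show "n = card (J - {j})" using Suc.hyps(2) \<open>j \<in> J\<close> Suc.prems(1) by simp
      show "q ^ (card (J - {j}) + 1) * (fact (card (J - {j})))\<^sup>2 \<le> card ?I"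
        using big \<open>n = card (J - {j})\<close> by (simp add: h_def)
      show "\<forall>i\<in>?I. inj_on (x i) (J - {j})" using Suc.prems(5) by (blast intro: inj_on_subset)
    qed (use Suc.prems in auto)
    then obtain S where S: "S \<subseteq> ?I" "card S = q" "canonical x (J - {j}) S" by blast
    have "canonical x (insert j (J - {j})) S"
      using S Suc.prems(5) \<open>j \<in> J\<close> by (intro canonical_insert_constant_column[where v = v]) (auto simp: insert_absorb)
    then show ?thesis using S \<open>j \<in> J\<close> by (auto simp: insert_absorb)
  qed
qed

theorem lemma3p3:
  fixes V :: "'a set" and t q N :: nat and x :: "nat \<Rightarrow> nat \<Rightarrow> 'a"
  assumes "finite V"
    and "t > 0" and "q > 0"
    and "N = (fact t)^2 * q^(t+1)"
    and "\<And>i j. i < N \<Longrightarrow> j < t \<Longrightarrow> x i j \<in> V"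
    and "\<And>i. i < N \<Longrightarrow> inj_on (x i) {..<t}"
  shows "\<exists>ii :: nat \<Rightarrow> nat.
           strict_mono_on {..<q} ii \<and> (\<forall>k<q. ii k < N) \<and>
           (\<forall>j<t. (\<forall>k<q. \<forall>l<q. x (ii k) j = x (ii l) j)
                   \<or> inj_on (\<lambda>k. x (ii k) j) {..<q}) \<and>
           (\<forall>j<t. \<forall>j'<t. j \<noteq> j' \<longrightarrow>
              (\<lambda>k. x (ii k) j) ` {..<q} \<inter> (\<lambda>k. x (ii k) j') ` {..<q} = {})"
proof -
  obtain S where S: "S \<subseteq> {..<N}" "card S = q" "canonical x {..<t} S"
    using canonical_subfamily_exists[of "{..<t}" "{..<N}" q x] assms(3,4,6)
    by (auto simp: mult.commute)
  have "finite S" using S(1) finite_subset by blast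
  then obtain ii where ii: "strict_mono_on {..<q} ii" "ii ` {..<q} = S"
    using strict_mono_enumeration S(2) by metis
  then have "canonical (\<lambda>k. x (ii k)) {..<t} {..<q}"
    using S(3) canonical_reindex strict_mono_on_imp_inj_on by metis
  then have "\<forall>j<t. (\<forall>k<q. \<forall>l<q. x (ii k) j = x (ii l) j) \<or> inj_on (\<lambda>k. x (ii k) j) {..<q}"
    and "\<forall>j<t. \<forall>j'<t. j \<noteq> j' \<longrightarrow>
           (\<lambda>k. x (ii k) j) ` {..<q} \<inter> (\<lambda>k. x (ii k) j') ` {..<q} = {}"
    unfolding canonical_def column_def pairwise_def disjnt_def by auto
  moreover have "\<forall>k<q. ii k < N" using ii(2) S(1) by blast
  ultimately show ?thesis using ii(1) by blast
qed

end
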